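(* Consider $n$ bosonic modes with drift matrix $A$ (satisfying $A+A^{\sf T}<0$) and Gaussian white noise with diffusion matrix $D$, subject to continuous weak general-dyne measurement of the environment and linear (Markovian) feedback driving $\hat H_f=-\hat{\mathbf R}^{\sf T}\Omega B\,\mathbf y(t)$, where $\mathbf y(t)$ is the measured current and $B$ is any real matrix. Let $\sigma$ be the (unconditional) steady-state covariance matrix achievable in this way, and let $\lambda^{\uparrow}_1$ be its smallest eigenvalue. Let $\alpha^{\uparrow}_1$ be the smallest eigenvalue of $-(A+A^{\sf T})$ and $\delta^{\downarrow}_1$ the largest eigenvalue of $D$. Then $$\lambda^{\uparrow}_1\ge\frac{\alpha^{\uparrow}_1}{\delta^{\downarrow}_1}.$$
   Context: Setting: $n$ bosonic modes with canonical operators $\hat{\mathbf R}=(\hat x_1,\hat p_1,\dots,\hat x_n,\hat p_n)^{\sf T}$, $[\hat R_j,\hat R_k]=i\Omega_{jk}$, $\Omega=\bigoplus_{j=1}^n\begin{pmatrix}0&1\\-1&0\end{pmatrix}$. The covariance matrix (CM) of a state $\varrho$ is $\sigma_{jk}=\mathrm{Tr}(\{\hat R_j,\hat R_k\}\varrho)-2\mathrm{Tr}(\hat R_j\varrho)\mathrm{Tr}(\hat R_k\varrho)$; physical CMs satisfy $\sigma+i\Omega\ge0$. The free dynamics is the Lindblad master equation $\dot\varrho=-i[\hat H,\varrho]+\sum_{j=1}^L\mathcal D[\hat c_j]\varrho$, with $\hat H=\frac12\hat{\mathbf R}^{\sf T}H\hat{\mathbf R}$ ($H$ real symmetric), $\hat{\mathbf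 c}=\widetilde C\hat{\mathbf R}$ ($\widetilde C$ complex $L\times2n$), $\mathcal D[O]\varrho=O\varrho O^\dagger-\frac12(O^\dagger O\varrho+\varrho O^\dagger O)$; drift matrix $A=\Omega(H+\mathrm{Im}[\widetilde C^\dagger\widetilde C])$, diffusion matrix $D=2\Omega\,\mathrm{Re}[\widetilde C^\dagger\widetilde C]\Omega^{\sf T}$. A general-dyne measurement is any continuous diffusive Gaussian monitoring of the environment (unravelling of the master equation, described by a stochastic master equation); under it the conditional state is Gaussian with stochastic first moments and deterministic conditional CM $\sigma_c$, and a CM $\sigma_c$ arises as a stabilising steady-state conditional CM for some unravelling iff $\sigma_c+i\Omega\ge0$ and $A\sigma_c+\sigma_cA^{\sf T}+D\ge0$. The unconditional state is the average over measurement outcomes of the conditional states (with feedback included in the dynamics). *)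

theory Defs
  imports "HOL-Analysis.Analysis"
begin

text \<open>Phase-space indices for n modes: (j, False) is x_j, (j, True) is p_j.
  The ordering of the basis is irrelevant for eigenvalue statements.\<close>

type_synonym 'n pidx = "'n \<times> bool"

definition Omega :: "real^('n::finite pidx)^('n pidx)" where
  "Omega = (\<chi> r s. if fst r = fst s \<and> \<not> snd r \<and> snd s then 1
                    else if fst r = fst s \<and> snd r \<and> \<not> snd s then -1 else 0)"

definition CdagC :: "complex^('n::finite pidx)^('l::finite) \<Rightarrow> complex^('n pidx)^('n pidx)" where
  "CdagC C = (\<chi> i j. \<Sum>l\<in>UNIV. cnj (C $ l $ i) * C $ l $ j)"

definition drift :: "real^('n::finite pidx)^('n pidx) \<Rightarrow> complex^('n pidx)^('l::finite)
                     \<Rightarrow> real^('n pidx)^('n pidx)" where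
  "drift H C = Omega ** (H + (\<chi> i j. Im (CdagC C $ i $ j)))"

definition diffusion :: "complex^('n::finite pidx)^('l::finite) \<Rightarrow> real^('n pidx)^('n pidx)" where
  "diffusion C = 2 *\<^sub>R (Omega ** (\<chi> i j. Re (CdagC C $ i $ j)) ** transpose Omega)"

definition psd :: "real^'m^'m \<Rightarrow> bool" where
  "psd M \<longleftrightarrow> (\<forall>v. 0 \<le> v \<bullet> (M *v v))"

definition negdef :: "real^'m^'m \<Rightarrow> bool" where
  "negdef M \<longleftrightarrow> (\<forall>v. v \<noteq> 0 \<longrightarrow> v \<bullet> (M *v v) < 0)"

definition cpsd :: "complex^'m^'m \<Rightarrow> bool" where
  "cpsd M \<longleftrightarrow> (\<forall>z :: complex^'m.
      let q = (\<Sum>i\<in>UNIV. \<Sum>j\<in>UNIV. cnj (z $ i) * M $ i $ j * z $ j) in Im q = 0 \<and> 0 \<le> Re q)"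

definition plus_iOmega :: "real^('n::finite pidx)^('n pidx) \<Rightarrow> complex^('n pidx)^('n pidx)" where
  "plus_iOmega S = (\<chi> i j. complex_of_real (S $ i $ j) + \<i> * complex_of_real (Omega $ i $ j))"

text \<open>Stabilising steady-state conditional CMs attainable by some general-dyne unravelling
  (characterisation given in the setting).\<close>
definition conditional_cm :: "real^('n::finite pidx)^('n pidx) \<Rightarrow> real^('n pidx)^('n pidx)
                              \<Rightarrow> real^('n pidx)^('n pidx) \<Rightarrow> bool" where
  "conditional_cm A D Sc \<longleftrightarrow> transpose Sc = Sc \<and> cpsd (plus_iOmega Sc)
      \<and> psd (A ** Sc + Sc ** transpose A + D)"

definition achievable_cm :: "real^('n::finite pidx)^('n pidx) \<Rightarrow> real^('n pidx)^('n pidx)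
                              \<Rightarrow> real^('n pidx)^('n pidx) \<Rightarrow> bool" where
  "achievable_cm A D S \<longleftrightarrow> (\<exists>Sc M. conditional_cm A D Sc \<and> transpose M = M \<and> psd M
      \<and> S = Sc + M)"

definition is_eigenvalue :: "real^'m^'m \<Rightarrow> real \<Rightarrow> bool" where
  "is_eigenvalue M c \<longleftrightarrow> (\<exists>v. v \<noteq> 0 \<and> M *v v = c *\<^sub>R v)"

definition min_eig :: "real^'m^'m \<Rightarrow> real" where
  "min_eig M = Min {c. is_eigenvalue M c}"

definition max_eig :: "real^'m^'m \<Rightarrow> real" where
  "max_eig M = Max {c. is_eigenvalue M c}"

end

theory Submission
  imports Defs
begin

text \<open>Writing \<open>z = a + i t \<Omega>\<^sup>T a\<close> in \<open>z\<^sup>\<dagger>(\<sigma>\<^sub>c + i\<Omega>)z \<ge> 0\<close> shows that a conditional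
  covariance matrix obeys \<open>\<lambda>\<^sub>m\<^sub>i\<^sub>n(\<sigma>\<^sub>c) \<lambda>\<^sub>m\<^sub>a\<^sub>x(\<sigma>\<^sub>c) \<ge> 1\<close>. Evaluating the steady-state
  condition \<open>A\<sigma>\<^sub>c + \<sigma>\<^sub>cA\<^sup>T + D \<ge> 0\<close> on a top eigenvector of \<open>\<sigma>\<^sub>c\<close> gives
  \<open>\<alpha> \<lambda>\<^sub>m\<^sub>a\<^sub>x(\<sigma>\<^sub>c) \<le> \<delta>\<close>, hence \<open>\<lambda>\<^sub>m\<^sub>i\<^sub>n(\<sigma>\<^sub>c) \<ge> 1/\<lambda>\<^sub>m\<^sub>a\<^sub>x(\<sigma>\<^sub>c) \<ge> \<alpha>/\<delta>\<close>. Averaging over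
  the measurement record adds the positive semidefinite covariance of the first moments, which
  can only raise the smallest eigenvalue.\<close>

lemma transpose_add: "transpose (A + B) = transpose A + transpose (B :: 'a::ring_1^'n^'m)"
  by (simp add: transpose_def vec_eq_iff)

lemma transpose_uminus: "transpose (- A) = - transpose (A :: 'a::ring_1^'n^'m)"
  by (simp add: transpose_def vec_eq_iff)

lemma transpose_diff: "transpose (A - B) = transpose A - transpose (B :: 'a::ring_1^'n^'m)"
  by (simp add: transpose_def vec_eq_iff)

lemma matrix_vector_mult_uminus: "(- A) *v x = - (A *v x)" for A :: "'a::ring_1^'n^'m"
  by (simp add: matrix_vector_mult_def vec_eq_iff sum_negf)

lemma symmetric_inner_matrix_vector_commute:
  fixes M :: "real^'m^'m"
  assumes "transpose M = M"
  shows "x \<bullet> (M *v y) = y \<bullet> (M *v x)"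
  by (metis assms dot_lmul_matrix inner_commute transpose_matrix_vector)

lemma linear_coeff_eq_0_if_quadratic_nonneg:
  fixes c d :: real
  assumes "\<And>t. 0 \<le> 2 * t * c + t\<^sup>2 * d"
  shows "c = 0"
proof -
  define k where "k = \<bar>d\<bar> + 1"
  have k: "k > 0" "d - 2 * k < 0" unfolding k_def by auto
  have "0 \<le> 2 * (- c / k) * c + (- c / k)\<^sup>2 * d" by (rule assms)
  also have "\<dots> = c\<^sup>2 * (d - 2 * k) / k\<^sup>2"
    using k by (simp add: field_simps power2_eq_square)
  finally have "0 \<le> c\<^sup>2 * (d - 2 * k)"
    using k by (simp add: zero_le_divide_iff)
  moreover have "c\<^sup>2 * (d - 2 * k) \<le> 0"
    using k by (intro mult_nonneg_nonpos) auto
  ultimately show ?thesis using k by simp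
qed

lemma psd_symmetric_kernel:
  fixes B :: "real^'m^'m"
  assumes sym: "transpose B = B" and "psd B" and zero: "u \<bullet> (B *v u) = 0"
  shows "B *v u = 0"
proof -
  have "0 \<le> 2 * t * (y \<bullet> (B *v u)) + t\<^sup>2 * (y \<bullet> (B *v y))" for y t
  proof -
    have "0 \<le> (u + t *\<^sub>R y) \<bullet> (B *v (u + t *\<^sub>R y))"
      using \<open>psd B\<close> unfolding psd_def by blast
    also have "\<dots> = 2 * t * (y \<bullet> (B *v u)) + t\<^sup>2 * (y \<bullet> (B *v y))"
      using zero symmetric_inner_matrix_vector_commute[OF sym, of u y]
      by (simp add: algebra_simps power2_eq_square)
    finally show ?thesis .
  qed
  then have "(B *v u) \<bullet> (B *v u) = 0"
    using linear_coeff_eq_0_if_quadratic_nonneg by blast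
  then show ?thesis by simp
qed

text \<open>The maximiser of the Rayleigh quotient is an eigenvector, because
  \<open>\<mu> I - M\<close> is positive semidefinite and its form vanishes there.\<close>

lemma symmetric_matrix_max_eigenvector:
  fixes M :: "real^'m^'m"
  assumes sym: "transpose M = M"
  obtains u \<mu> where "u \<noteq> 0" "M *v u = \<mu> *\<^sub>R u" "\<And>x. x \<bullet> (M *v x) \<le> \<mu> * (x \<bullet> x)"
proof -
  let ?q = "\<lambda>x. x \<bullet> (M *v x)"
  have "continuous_on (sphere 0 1) ?q"
    by (intro continuous_intros linear_continuous_on) (simp add: bounded_linear_def)
  then obtain u where u: "u \<in> sphere 0 1" and umax: "\<And>y. y \<in> sphere 0 1 \<Longrightarrow> ?q y \<le> ?q u"
    using continuous_attains_sup[of "sphere 0 1" ?q] by auto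
  define \<mu> where "\<mu> = ?q u"
  have uu: "u \<bullet> u = 1" using u by (simp add: dot_square_norm)
  have bound: "?q x \<le> \<mu> * (x \<bullet> x)" for x
  proof (cases "x = 0")
    case False
    then have "(1 / norm x) *\<^sub>R x \<in> sphere 0 1" by simp
    then have "?q ((1 / norm x) *\<^sub>R x) \<le> \<mu>" unfolding \<mu>_def by (rule umax)
    then have "?q x / (x \<bullet> x) \<le> \<mu>"
      by (simp add: matrix_vector_mult_scaleR dot_square_norm power2_eq_square)
    then show ?thesis
      using False by (simp add: divide_le_eq mult.commute)
  qed simp
  define B where "B = \<mu> *\<^sub>R mat 1 - M"
  have B_mult: "B *v x = \<mu> *\<^sub>R x - M *v x" for x
    by (simp add: B_def matrix_vector_mult_diff_rdistrib scaleR_matrix_vector_assoc[symmetric])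
  have "transpose B = B" using sym by (simp add: B_def transpose_diff transpose_scalar)
  moreover have "psd B" using bound by (simp add: psd_def B_mult inner_diff_right)
  moreover have "u \<bullet> (B *v u) = 0" using uu by (simp add: B_mult inner_diff_right \<mu>_def)
  ultimately have "B *v u = 0" by (rule psd_symmetric_kernel)
  then have "M *v u = \<mu> *\<^sub>R u" by (simp add: B_mult)
  moreover have "u \<noteq> 0" using uu by auto
  ultimately show ?thesis using bound that by blast
qed

lemma finite_eigenvalues_symmetric:
  fixes M :: "real^'m^'m"
  assumes sym: "transpose M = M"
  shows "finite {c. is_eigenvalue M c}"
proof -
  let ?E = "{c. is_eigenvalue M c}"
  define v where "v c = (SOME v. v \<noteq> 0 \<and> M *v v = c *\<^sub>R v)" for c
  have v: "v c \<noteq> 0" "M *v v c = c *\<^sub>R v c" if "c \<in> ?E" for c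
    using someI_ex[of "\<lambda>v. v \<noteq> 0 \<and> M *v v = c *\<^sub>R v"] that
    by (auto simp: v_def is_eigenvalue_def)
  have orth: "v c \<bullet> v d = 0" if "c \<in> ?E" "d \<in> ?E" "c \<noteq> d" for c d
  proof -
    have "c * (v c \<bullet> v d) = d * (v c \<bullet> v d)"
      using symmetric_inner_matrix_vector_commute[OF sym, of "v d" "v c"] v that
      by (simp add: inner_commute)
    with \<open>c \<noteq> d\<close> show ?thesis by simp
  qed
  have "inj_on v ?E"
    using orth v(1) by (metis inj_onI inner_eq_zero_iff)
  moreover have "independent (v ` ?E)"
    using orth v(1) by (intro pairwise_orthogonal_independent) (auto simp: pairwise_def orthogonal_def)
  ultimately show ?thesis
    using finiteI_independent finite_imageD by blast
qed

lemma symmetric_max_eig: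
  fixes M :: "real^'m^'m"
  assumes sym: "transpose M = M"
  shows is_eigenvalue_max_eig: "is_eigenvalue M (max_eig M)"
    and quadratic_form_le_max_eig: "x \<bullet> (M *v x) \<le> max_eig M * (x \<bullet> x)"
proof -
  obtain u \<mu> where u: "u \<noteq> 0" "M *v u = \<mu> *\<^sub>R u"
    and bound: "\<And>x. x \<bullet> (M *v x) \<le> \<mu> * (x \<bullet> x)"
    using symmetric_matrix_max_eigenvector[OF sym] by blast
  have "max_eig M = \<mu>"
    unfolding max_eig_def
  proof (rule Max_eqI[OF finite_eigenvalues_symmetric[OF sym]])
    fix c assume "c \<in> {c. is_eigenvalue M c}"
    then obtain w where "w \<noteq> 0" "M *v w = c *\<^sub>R w" by (auto simp: is_eigenvalue_def)
    with bound[of w] show "c \<le> \<mu>" by simp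
  qed (use u in \<open>auto simp: is_eigenvalue_def\<close>)
  with u bound show "is_eigenvalue M (max_eig M)" "x \<bullet> (M *v x) \<le> max_eig M * (x \<bullet> x)"
    by (auto simp: is_eigenvalue_def)
qed

lemma symmetric_min_eig:
  fixes M :: "real^'m^'m"
  assumes sym: "transpose M = M"
  shows is_eigenvalue_min_eig: "is_eigenvalue M (min_eig M)"
    and min_eig_le_quadratic_form: "min_eig M * (x \<bullet> x) \<le> x \<bullet> (M *v x)"
proof -
  have "transpose (- M) = - M" using sym by (simp add: transpose_uminus)
  then obtain u \<mu> where u0: "u \<noteq> 0" and eig: "(- M) *v u = \<mu> *\<^sub>R u"
    and bound0: "\<And>x. x \<bullet> ((- M) *v x) \<le> \<mu> * (x \<bullet> x)"
    using symmetric_matrix_max_eigenvector by blast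
  have u: "u \<noteq> 0" "M *v u = (- \<mu>) *\<^sub>R u"
    using u0 eig by (simp_all add: matrix_vector_mult_uminus minus_equation_iff[of "M *v u"])
  have bound: "- \<mu> * (x \<bullet> x) \<le> x \<bullet> (M *v x)" for x
    using bound0[of x] by (simp add: matrix_vector_mult_uminus)
  have "min_eig M = - \<mu>"
    unfolding min_eig_def
  proof (rule Min_eqI[OF finite_eigenvalues_symmetric[OF sym]])
    fix c assume "c \<in> {c. is_eigenvalue M c}"
    then obtain w where "w \<noteq> 0" "M *v w = c *\<^sub>R w" by (auto simp: is_eigenvalue_def)
    with bound[of w] have "- \<mu> * (w \<bullet> w) \<le> c * (w \<bullet> w)" by simp
    then show "- \<mu> \<le> c"
      by (rule mult_right_le_imp_le) (simp add: \<open>w \<noteq> 0\<close>)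
  qed (use u in \<open>auto simp: is_eigenvalue_def\<close>)
  with u bound show "is_eigenvalue M (min_eig M)" "min_eig M * (x \<bullet> x) \<le> x \<bullet> (M *v x)"
    by (auto simp: is_eigenvalue_def)
qed

lemma min_eig_greatest:
  fixes M :: "real^'m^'m"
  assumes sym: "transpose M = M" and bound: "\<And>x. L * (x \<bullet> x) \<le> x \<bullet> (M *v x)"
  shows "L \<le> min_eig M"
proof -
  obtain v where "v \<noteq> 0" "M *v v = min_eig M *\<^sub>R v"
    using is_eigenvalue_min_eig[OF sym] by (auto simp: is_eigenvalue_def)
  with bound[of v] show ?thesis by simp
qed

lemma min_eig_add_psd:
  fixes M P :: "real^'m^'m"
  assumes "transpose M = M" "transpose P = P" "psd P"
  shows "min_eig M \<le> min_eig (M + P)"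
proof (rule min_eig_greatest)
  show "transpose (M + P) = M + P" using assms by (simp add: transpose_add)
  show "min_eig M * (x \<bullet> x) \<le> x \<bullet> ((M + P) *v x)" for x
    using min_eig_le_quadratic_form[OF assms(1), of x] \<open>psd P\<close>
    by (simp add: psd_def matrix_vector_mult_add_rdistrib inner_add_right add_increasing2)
qed

lemma Omega_nth: "(Omega :: real^('n::finite pidx)^('n pidx)) $ r $ s =
    (if s = (fst r, \<not> snd r) then (if snd r then -1 else 1) else 0)"
  by (cases r; cases s) (auto simp: Omega_def)

lemma transpose_Omega: "transpose (Omega :: real^('n::finite pidx)^('n pidx)) = - Omega"
  by (auto simp: vec_eq_iff transpose_def Omega_nth)

lemma Omega_mult_nth:
  "((Omega :: real^('n::finite pidx)^('n pidx)) *v x) $ r =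
    (if snd r then - x $ (fst r, False) else x $ (fst r, True))"
proof -
  have "(Omega *v x) $ r = (\<Sum>s\<in>UNIV. if s = (fst r, \<not> snd r) then (if snd r then -1 else 1) * x $ s else 0)"
    unfolding matrix_vector_mult_def vec_lambda_beta by (intro sum.cong) (auto simp: Omega_nth)
  then show ?thesis by auto
qed

lemma inner_Omega_mult_self:
  "((Omega :: real^('n::finite pidx)^('n pidx)) *v x) \<bullet> (Omega *v x) = x \<bullet> x"
proof -
  define flip :: "'n pidx \<Rightarrow> 'n pidx" where "flip r = (fst r, \<not> snd r)" for r
  have "bij flip" by (rule bij_betw_byWitness[where f' = flip]) (auto simp: flip_def)
  have "(Omega *v x) \<bullet> (Omega *v x) = (\<Sum>r\<in>UNIV. (x $ flip r)\<^sup>2)"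
    unfolding inner_vec_def by (intro sum.cong) (auto simp: Omega_mult_nth flip_def power2_eq_square)
  also have "\<dots> = (\<Sum>r\<in>UNIV. (x $ r)\<^sup>2)"
    using sum.reindex_bij_betw[OF \<open>bij flip\<close>, of "\<lambda>r. (x $ r)\<^sup>2"] by simp
  also have "\<dots> = x \<bullet> x" unfolding inner_vec_def by (simp add: power2_eq_square)
  finally show ?thesis .
qed

lemma cpsd_plus_iOmega_real_form:
  fixes S :: "real^('n::finite pidx)^('n pidx)"
  assumes "cpsd (plus_iOmega S)"
  shows "0 \<le> a \<bullet> (S *v a) + b \<bullet> (S *v b) - a \<bullet> (Omega *v b) + b \<bullet> (Omega *v a)"
proof -
  define z where "z = (\<chi> i. Complex (a $ i) (b $ i))"
  have "0 \<le> Re (\<Sum>i\<in>UNIV. \<Sum>j\<in>UNIV. cnj (z $ i) * plus_iOmega S $ i $ j * z $ j)"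
    using assms by (simp add: cpsd_def Let_def)
  also have "\<dots> = (\<Sum>i\<in>UNIV. \<Sum>j\<in>UNIV. a$i * S$i$j * a$j + b$i * S$i$j * b$j
                                         - a$i * Omega$i$j * b$j + b$i * Omega$i$j * a$j)"
    by (simp add: z_def plus_iOmega_def algebra_simps)
  also have "\<dots> = a \<bullet> (S *v a) + b \<bullet> (S *v b) - a \<bullet> (Omega *v b) + b \<bullet> (Omega *v a)"
    by (simp add: inner_vec_def matrix_vector_mult_def sum_distrib_left sum.distrib
        sum_subtractf mult.assoc)
  finally show ?thesis .
qed

text \<open>The choice \<open>b = t \<Omega>\<^sup>T a\<close> in the real form of \<open>\<sigma> + i\<Omega> \<ge> 0\<close>.\<close>

lemma cpsd_plus_iOmega_quadratic_bound:
  fixes S :: "real^('n::finite pidx)^('n pidx)"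
  assumes sym: "transpose S = S" and "cpsd (plus_iOmega S)"
  shows "2 * t * (a \<bullet> a) \<le> a \<bullet> (S *v a) + t\<^sup>2 * max_eig S * (a \<bullet> a)"
proof -
  define w where "w = transpose Omega *v a"
  have Omega_a: "Omega *v a = - w"
    by (simp add: w_def transpose_Omega matrix_vector_mult_uminus)
  have ww: "w \<bullet> w = a \<bullet> a"
    using inner_Omega_mult_self[of a] by (simp add: Omega_a)
  have a_Omega_w: "a \<bullet> (Omega *v w) = w \<bullet> w"
    by (simp add: dot_lmul_matrix[symmetric] w_def)
  then have "0 \<le> a \<bullet> (S *v a) + t\<^sup>2 * (w \<bullet> (S *v w)) - 2 * t * (w \<bullet> w)"
    using cpsd_plus_iOmega_real_form[OF assms(2), of a "t *\<^sub>R w"]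
    by (simp add: Omega_a a_Omega_w matrix_vector_mult_scaleR power2_eq_square)
  moreover have "t\<^sup>2 * (w \<bullet> (S *v w)) \<le> t\<^sup>2 * (max_eig S * (w \<bullet> w))"
    by (intro mult_left_mono quadratic_form_le_max_eig[OF sym]) simp
  ultimately show ?thesis by (simp add: ww)
qed

lemma cpsd_plus_iOmega_eig_bounds:
  fixes S :: "real^('n::finite pidx)^('n pidx)"
  assumes sym: "transpose S = S" and "cpsd (plus_iOmega S)"
  shows "1 \<le> max_eig S" and "1 \<le> min_eig S * max_eig S"
proof -
  obtain v where "v \<noteq> 0" and v: "S *v v = min_eig S *\<^sub>R v"
    using is_eigenvalue_min_eig[OF sym] by (auto simp: is_eigenvalue_def)
  then have vv: "v \<bullet> v > 0" by simp
  have "2 * t * (v \<bullet> v) \<le> (min_eig S + t\<^sup>2 * max_eig S) * (v \<bullet> v)" for t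
    using cpsd_plus_iOmega_quadratic_bound[OF assms, of t v] v by (simp add: algebra_simps)
  then have bound: "2 * t \<le> min_eig S + t\<^sup>2 * max_eig S" for t
    using vv mult_right_le_imp_le by blast
  have "min_eig S * (v \<bullet> v) \<le> max_eig S * (v \<bullet> v)"
    using quadratic_form_le_max_eig[OF sym, of v] v by simp
  then have "min_eig S \<le> max_eig S" using vv by simp
  with bound[of 1] show max1: "1 \<le> max_eig S" by simp
  from bound[of "1 / max_eig S"] max1 have "1 / max_eig S \<le> min_eig S"
    by (simp add: power2_eq_square)
  with max1 show "1 \<le> min_eig S * max_eig S" by (simp add: divide_le_eq mult.commute)
qed

lemma steady_state_eigenvector_bound:
  fixes A S D :: "real^'m^'m"
  assumes sym: "transpose S = S" and "psd (A ** S + S ** transpose A + D)"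
    and eig: "S *v u = \<mu> *\<^sub>R u"
  shows "\<mu> * (u \<bullet> (- (A + transpose A) *v u)) \<le> u \<bullet> (D *v u)"
proof -
  have "0 \<le> u \<bullet> ((A ** S + S ** transpose A + D) *v u)"
    using assms(2) unfolding psd_def by blast
  also have "\<dots> = u \<bullet> (A *v (S *v u)) + u \<bullet> (S *v (transpose A *v u)) + u \<bullet> (D *v u)"
    by (simp add: matrix_vector_mult_add_rdistrib matrix_vector_mul_assoc inner_add_right
        del: transpose_matrix_vector)
  also have "u \<bullet> (S *v (transpose A *v u)) = \<mu> * (u \<bullet> (transpose A *v u))"
    using symmetric_inner_matrix_vector_commute[OF sym, of u] eig
    by (simp add: inner_commute del: transpose_matrix_vector)
  finally show ?thesis
    using eig by (simp add: matrix_vector_mult_uminus algebra_simps del: transpose_matrix_vector)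
qed

lemma conditional_cm_max_eig_bound:
  fixes A D Sc :: "real^('n::finite pidx)^('n pidx)"
  assumes Sc: "conditional_cm A D Sc" and D_sym: "transpose D = D"
    and stable: "negdef (A + transpose A)"
  shows "0 < max_eig D" and "min_eig (- (A + transpose A)) * max_eig Sc \<le> max_eig D"
proof -
  let ?N = "- (A + transpose A)"
  have N_sym: "transpose ?N = ?N" by (simp add: transpose_def vec_eq_iff)
  have Sc_sym: "transpose Sc = Sc" and Sc_cpsd: "cpsd (plus_iOmega Sc)"
    and steady: "psd (A ** Sc + Sc ** transpose A + D)"
    using Sc unfolding conditional_cm_def by auto
  have mu: "1 \<le> max_eig Sc" by (rule cpsd_plus_iOmega_eig_bounds[OF Sc_sym Sc_cpsd])
  obtain u where "u \<noteq> 0" and u: "Sc *v u = max_eig Sc *\<^sub>R u"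
    using is_eigenvalue_max_eig[OF Sc_sym] by (auto simp: is_eigenvalue_def)
  then have uu: "0 < u \<bullet> u" by simp
  have "u \<bullet> ((A + transpose A) *v u) < 0"
    using stable \<open>u \<noteq> 0\<close> unfolding negdef_def by blast
  then have "0 < u \<bullet> (?N *v u)"
    by (simp only: matrix_vector_mult_uminus inner_minus_right neg_0_less_iff_less)
  have D_bound: "max_eig Sc * (u \<bullet> (?N *v u)) \<le> max_eig D * (u \<bullet> u)"
    using steady_state_eigenvector_bound[OF Sc_sym steady u]
      quadratic_form_le_max_eig[OF D_sym, of u] by linarith
  moreover have "min_eig ?N * max_eig Sc * (u \<bullet> u) \<le> max_eig Sc * (u \<bullet> (?N *v u))"
    using min_eig_le_quadratic_form[OF N_sym, of u] mu by (simp add: mult.commute mult.left_commute)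
  ultimately have "min_eig ?N * max_eig Sc * (u \<bullet> u) \<le> max_eig D * (u \<bullet> u)"
    by linarith
  with uu show "min_eig ?N * max_eig Sc \<le> max_eig D" by simp
  have "0 < max_eig Sc * (u \<bullet> (?N *v u))"
    using mu \<open>0 < u \<bullet> (?N *v u)\<close> by simp
  with D_bound have "0 < max_eig D * (u \<bullet> u)" by linarith
  with uu show "0 < max_eig D" by (simp add: zero_less_mult_iff del: inner_gt_zero_iff)
qed

lemma diffusion_symmetric: "transpose (diffusion C) = diffusion (C :: complex^('n::finite pidx)^('l::finite))"
proof -
  let ?R = "(\<chi> i j. Re (CdagC C $ i $ j)) :: real^('n pidx)^('n pidx)"
  have R: "transpose ?R = ?R"
    by (simp add: vec_eq_iff transpose_def CdagC_def algebra_simps)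
  show ?thesis unfolding diffusion_def
    by (simp add: transpose_scalar matrix_transpose_mul R matrix_mul_assoc)
qed

theorem proposition1:
  fixes H :: "real^('n::finite pidx)^('n pidx)"
    and C :: "complex^('n pidx)^('l::finite)"
    and S :: "real^('n pidx)^('n pidx)"
  assumes "transpose H = H"
    and "negdef (drift H C + transpose (drift H C))"
    and "achievable_cm (drift H C) (diffusion C) S"
  shows "min_eig S \<ge> min_eig (- (drift H C + transpose (drift H C))) / max_eig (diffusion C)"
proof -
  let ?A = "drift H C" and ?D = "diffusion C"
  obtain Sc P where Sc: "conditional_cm ?A ?D Sc" and "transpose P = P" "psd P" and "S = Sc + P"
    using assms(3) unfolding achievable_cm_def by blast
  have Sc_sym: "transpose Sc = Sc" and "cpsd (plus_iOmega Sc)"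
    using Sc unfolding conditional_cm_def by auto
  then have mu: "1 \<le> max_eig Sc" and uncertainty: "1 \<le> min_eig Sc * max_eig Sc"
    by (rule cpsd_plus_iOmega_eig_bounds)+
  have "0 < max_eig ?D" and "min_eig (- (?A + transpose ?A)) * max_eig Sc \<le> max_eig ?D"
    using conditional_cm_max_eig_bound[OF Sc diffusion_symmetric assms(2)] by auto
  then have "min_eig (- (?A + transpose ?A)) / max_eig ?D \<le> 1 / max_eig Sc"
    using mu by (simp add: divide_le_eq le_divide_eq mult.commute)
  also have "\<dots> \<le> min_eig Sc"
    using mu uncertainty by (simp add: divide_le_eq mult.commute)
  also have "\<dots> \<le> min_eig S"
    using min_eig_add_psd[OF Sc_sym \<open>transpose P = P\<close> \<open>psd P\<close>] \<open>S = Sc + P\<close> by simp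
  finally show ?thesis .
qed

end
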